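(* Let $(\mathcal A,r)$ be a population game, $\mathcal G=(\mathcal H,\boldsymbol\eta,W)$ an undirected connected community network, and $\mathbf f$ an imitation mechanism satisfying Assumption 1. Let $\mathbf x^\bullet\in\mathcal X^\bullet\setminus\mathcal X^*$ and $\mathbf y^\bullet=\mathbf x^\bullet\mathbf 1$, and let $i\in\mathcal A$ be an action with $r_i(\mathbf y^\bullet)>r_j(\mathbf y^\bullet)$ for all $j\in\mathcal S_{\mathbf y^\bullet}$. Then there exists $\varepsilon>0$ such that for every $\mathbf x\in\mathcal X$ with $\|\mathbf x-\mathbf x^\bullet\|<\varepsilon$ and $y_i>0$ (where $\mathbf y=\mathbf x\mathbf 1$), one has $\dot y_i>0$, where $\dot y_i=\sum_{h\in\mathcal H}\dot x_{ih}$ is computed from the right-hand side of the network imitation dynamics at $\mathbf x$.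
   Context: Let $\mathcal A$ be a finite set of actions, $\mathcal Y=\{\mathbf y\in\mathbb R_+^{\mathcal A}:\mathbf 1^\top\mathbf y=1\}$, reward functions $r_i:\mathcal Y\to\mathbb R$. Community network $\mathcal G=(\mathcal H,\boldsymbol\eta,W)$: finite $\mathcal H$, $\eta_h>0$ with $\sum_h\eta_h=1$, nonnegative $W$ with positive diagonal; connected = $W$ irreducible; undirected = $W=W^\top$. $\mathcal X=\{\mathbf x\in\mathbb R_+^{\mathcal A\times\mathcal H}:\mathbf 1^\top\mathbf x=\boldsymbol\eta^\top\}$. Imitation mechanism: Lipschitz $\mathbf f:\mathcal Y\to\mathbb R_+^{\mathcal A\times\mathcal A}$. Dynamics: $$\dot x_{ih}=\sum_{j\in\mathcal A}\sum_{k\in\mathcal H}\big(x_{jh}W_{hk}x_{ik}f_{ji}(\mathbf x\mathbf 1)-x_{ih}W_{hk}x_{jk}f_{ij}(\mathbf x\mathbf 1)\big).$$ Assumption 1: $\operatorname{sgn}(f_{ij}(\mathbf y)-f_{ji}(\mathbf y))=\operatorname{sgn}(r_j(\mathbf y)-r_i(\mathbf y))$ for all $i,j,\mathbf y$. Support $\mathcal S_{\mathbf y}=\{i:y_i>0\}$. Nash equilibria: $\mathcal Y^*=\{\mathbf y\in\mathcal Y: y_i>0\Rightarrow r_i(\mathbf y)=\max_{j\in\mathcal A}r_j(\mathbf y)\}$; restricted Nash equilibria: $\mathcal Y^\bullet=\{\mathbf y\in\mathcal Y:y_i>0,y_j>0\Rightarrow r_i(\mathbf y)=r_j(\mathbf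 y)\}$; $\mathcal X^*=\{\mathbf x\in\mathcal X:\mathbf x\mathbf 1\in\mathcal Y^*\}$, $\mathcal X^\bullet=\{\mathbf x\in\mathcal X:\mathbf x\mathbf 1\in\mathcal Y^\bullet\}$. *)

theory Defs
  imports "HOL-Analysis.Analysis"
begin

text \<open>Actions are the elements of a finite type 'a, communities those of a finite type 'h.
  Vectors y in R^A are functions 'a => real, matrices x in R^(A x H) are functions
  'a => 'h => real (x i h = x_{ih}).\<close>

definition simplexY :: "('a::finite \<Rightarrow> real) set" where
  "simplexY = {y. (\<forall>i. 0 \<le> y i) \<and> (\<Sum>i\<in>UNIV. y i) = 1}"

definition stateX :: "('h::finite \<Rightarrow> real) \<Rightarrow> ('a::finite \<Rightarrow> 'h \<Rightarrow> real) set" where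
  "stateX eta = {x. (\<forall>i h. 0 \<le> x i h) \<and> (\<forall>h. (\<Sum>i\<in>UNIV. x i h) = eta h)}"

definition agg :: "('a::finite \<Rightarrow> 'h::finite \<Rightarrow> real) \<Rightarrow> 'a \<Rightarrow> real" where
  "agg x = (\<lambda>i. \<Sum>h\<in>UNIV. x i h)"

definition xdist :: "('a::finite \<Rightarrow> 'h::finite \<Rightarrow> real) \<Rightarrow> ('a \<Rightarrow> 'h \<Rightarrow> real) \<Rightarrow> real" where
  "xdist x z = sqrt (\<Sum>i\<in>UNIV. \<Sum>h\<in>UNIV. (x i h - z i h)^2)"

definition ydist :: "('a::finite \<Rightarrow> real) \<Rightarrow> ('a \<Rightarrow> real) \<Rightarrow> real" where
  "ydist y z = sqrt (\<Sum>i\<in>UNIV. (y i - z i)^2)"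

definition community_network :: "('h::finite \<Rightarrow> real) \<Rightarrow> ('h \<Rightarrow> 'h \<Rightarrow> real) \<Rightarrow> bool" where
  "community_network eta W \<longleftrightarrow>
     (\<forall>h. 0 < eta h) \<and> (\<Sum>h\<in>UNIV. eta h) = 1 \<and>
     (\<forall>h k. 0 \<le> W h k) \<and> (\<forall>h. 0 < W h h)"

text \<open>Connected: W irreducible, i.e. the graph of positive entries is strongly connected.\<close>
definition irreducible_mat :: "('h \<Rightarrow> 'h \<Rightarrow> real) \<Rightarrow> bool" where
  "irreducible_mat W \<longleftrightarrow> (\<forall>h k. (h, k) \<in> {(a, b). 0 < W a b}\<^sup>*)"

definition undirected_mat :: "('h \<Rightarrow> 'h \<Rightarrow> real) \<Rightarrow> bool" where
  "undirected_mat W \<longleftrightarrow> (\<forall>h k. W h k = W k h)"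

definition imitation_mechanism ::
  "(('a::finite \<Rightarrow> real) \<Rightarrow> 'a \<Rightarrow> 'a \<Rightarrow> real) \<Rightarrow> bool" where
  "imitation_mechanism f \<longleftrightarrow>
     (\<forall>y\<in>simplexY. \<forall>i j. 0 \<le> f y i j) \<and>
     (\<exists>L. \<forall>y\<in>simplexY. \<forall>z\<in>simplexY. \<forall>i j. \<bar>f y i j - f z i j\<bar> \<le> L * ydist y z)"

definition assumption1 ::
  "('a::finite \<Rightarrow> ('a \<Rightarrow> real) \<Rightarrow> real) \<Rightarrow> (('a \<Rightarrow> real) \<Rightarrow> 'a \<Rightarrow> 'a \<Rightarrow> real) \<Rightarrow> bool" where
  "assumption1 r f \<longleftrightarrow>
     (\<forall>y\<in>simplexY. \<forall>i j. sgn (f y i j - f y j i) = sgn (r j y - r i y))"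

definition support :: "('a \<Rightarrow> real) \<Rightarrow> 'a set" where
  "support y = {i. 0 < y i}"

definition NashY :: "('a::finite \<Rightarrow> ('a \<Rightarrow> real) \<Rightarrow> real) \<Rightarrow> ('a \<Rightarrow> real) set" where
  "NashY r = {y\<in>simplexY. \<forall>i. 0 < y i \<longrightarrow> r i y = (MAX j\<in>UNIV. r j y)}"

definition RestrNashY :: "('a::finite \<Rightarrow> ('a \<Rightarrow> real) \<Rightarrow> real) \<Rightarrow> ('a \<Rightarrow> real) set" where
  "RestrNashY r = {y\<in>simplexY. \<forall>i j. 0 < y i \<and> 0 < y j \<longrightarrow> r i y = r j y}"

definition NashX :: "('h::finite \<Rightarrow> real) \<Rightarrow> ('a::finite \<Rightarrow> ('a \<Rightarrow> real) \<Rightarrow> real)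
     \<Rightarrow> ('a \<Rightarrow> 'h \<Rightarrow> real) set" where
  "NashX eta r = {x\<in>stateX eta. agg x \<in> NashY r}"

definition RestrNashX :: "('h::finite \<Rightarrow> real) \<Rightarrow> ('a::finite \<Rightarrow> ('a \<Rightarrow> real) \<Rightarrow> real)
     \<Rightarrow> ('a \<Rightarrow> 'h \<Rightarrow> real) set" where
  "RestrNashX eta r = {x\<in>stateX eta. agg x \<in> RestrNashY r}"

definition xdot :: "('h::finite \<Rightarrow> 'h \<Rightarrow> real) \<Rightarrow> (('a::finite \<Rightarrow> real) \<Rightarrow> 'a \<Rightarrow> 'a \<Rightarrow> real)
     \<Rightarrow> ('a \<Rightarrow> 'h \<Rightarrow> real) \<Rightarrow> 'a \<Rightarrow> 'h \<Rightarrow> real" where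
  "xdot W f x i h = (\<Sum>j\<in>UNIV. \<Sum>k\<in>UNIV.
      x j h * W h k * x i k * f (agg x) j i - x i h * W h k * x j k * f (agg x) i j)"

end

theory Submission
  imports Defs
begin

text \<open>With W symmetric, the growth rate of y_i equals
  \<Sum>h \<Sum>k W_hk x_ik \<Sum>j x_jh (f_ji - f_ij). By Assumption 1 and the strict payoff
  advantage of i, the gains f_ji - f_ij are positive for j in the support of the restricted
  equilibrium; by Lipschitz continuity they stay bounded below by a positive constant nearby,
  where moreover almost all mass of each community lies on that support. Hence every inner sum
  over j is positive, and since W_hh > 0 and some x_ik > 0 the whole expression is positive.\<close>

lemma sum_xdot_eq:
  fixes W :: "'h::finite \<Rightarrow> 'h \<Rightarrow> real" and x :: "'a::finite \<Rightarrow> 'h \<Rightarrow> real"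
  assumes sym: "\<And>h k. W h k = W k h"
  shows "(\<Sum>h\<in>UNIV. xdot W f x i h) =
    (\<Sum>h\<in>UNIV. \<Sum>k\<in>UNIV. W h k * x i k * (\<Sum>j\<in>UNIV. x j h * (f (agg x) j i - f (agg x) i j)))"
proof -
  define F where "F = f (agg x)"
  have outflow: "(\<Sum>h\<in>UNIV. \<Sum>j\<in>UNIV. \<Sum>k\<in>UNIV. x i h * W h k * x j k * F i j)
      = (\<Sum>h\<in>UNIV. \<Sum>j\<in>UNIV. \<Sum>k\<in>UNIV. x j h * W h k * x i k * F i j)"
  proof -
    have "(\<Sum>h\<in>UNIV. \<Sum>j\<in>UNIV. \<Sum>k\<in>UNIV. x i h * W h k * x j k * F i j)
        = (\<Sum>j\<in>UNIV. \<Sum>h\<in>UNIV. \<Sum>k\<in>UNIV. x i h * W h k * x j k * F i j)"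
      by (rule sum.swap)
    also have "\<dots> = (\<Sum>j\<in>UNIV. \<Sum>k\<in>UNIV. \<Sum>h\<in>UNIV. x i h * W h k * x j k * F i j)"
      by (rule sum.cong[OF refl], rule sum.swap)
    also have "\<dots> = (\<Sum>j\<in>UNIV. \<Sum>h\<in>UNIV. \<Sum>k\<in>UNIV. x j h * W h k * x i k * F i j)"
      by (simp add: sym mult.commute mult.left_commute)
    also have "\<dots> = (\<Sum>h\<in>UNIV. \<Sum>j\<in>UNIV. \<Sum>k\<in>UNIV. x j h * W h k * x i k * F i j)"
      by (rule sum.swap)
    finally show ?thesis .
  qed
  have "(\<Sum>h\<in>UNIV. xdot W f x i h) =
     (\<Sum>h\<in>UNIV. \<Sum>j\<in>UNIV. \<Sum>k\<in>UNIV. x j h * W h k * x i k * F j i)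
   - (\<Sum>h\<in>UNIV. \<Sum>j\<in>UNIV. \<Sum>k\<in>UNIV. x i h * W h k * x j k * F i j)"
    unfolding xdot_def F_def by (simp add: sum_subtractf)
  also have "\<dots> = (\<Sum>h\<in>UNIV. \<Sum>j\<in>UNIV. \<Sum>k\<in>UNIV. W h k * x i k * (x j h * (F j i - F i j)))"
    unfolding outflow by (simp add: sum_subtractf[symmetric] algebra_simps)
  also have "\<dots> = (\<Sum>h\<in>UNIV. \<Sum>k\<in>UNIV. \<Sum>j\<in>UNIV. W h k * x i k * (x j h * (F j i - F i j)))"
    by (rule sum.cong[OF refl], rule sum.swap)
  also have "\<dots> = (\<Sum>h\<in>UNIV. \<Sum>k\<in>UNIV. W h k * x i k * (\<Sum>j\<in>UNIV. x j h * (F j i - F i j)))"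
    by (simp add: sum_distrib_left)
  finally show ?thesis unfolding F_def .
qed

lemma double_sum_pos_of_positive_diagonal:
  fixes W :: "'h::finite \<Rightarrow> 'h \<Rightarrow> real"
  assumes W: "\<And>h k. 0 \<le> W h k" "\<And>h. 0 < W h h" and a: "\<And>k. 0 \<le> a k" "0 < a k0"
    and B: "\<And>h. 0 < B h"
  shows "0 < (\<Sum>h\<in>UNIV. \<Sum>k\<in>UNIV. W h k * a k * B h)"
proof -
  have nonneg: "0 \<le> W h k * a k * B h" for h k
    using W(1) a(1) B by (simp add: less_imp_le)
  have "0 < W k0 k0 * a k0 * B k0"
    using W(2) a(2) B by simp
  then have "0 < (\<Sum>k\<in>UNIV. W k0 k * a k * B k0)"
    using nonneg by (intro sum_pos2[where i=k0]) auto
  then show ?thesis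
    using nonneg
    by (intro sum_pos2[where i=k0 and f="\<lambda>h. \<Sum>k\<in>UNIV. W h k * a k * B h"]) (auto intro: sum_nonneg)
qed

lemma sum_xdot_pos:
  assumes net: "community_network eta W" and undirected: "undirected_mat W"
    and x: "x \<in> stateX eta" and yi: "0 < agg x i"
    and gain: "\<And>h. 0 < (\<Sum>j\<in>UNIV. x j h * (f (agg x) j i - f (agg x) i j))"
  shows "0 < (\<Sum>h\<in>UNIV. xdot W f x i h)"
proof -
  have xnn: "\<And>j h. 0 \<le> x j h" using x unfolding stateX_def by auto
  obtain k0 where "0 < x i k0"
    using yi xnn unfolding agg_def by (metis not_less sum_nonpos)
  have W: "\<And>h k. 0 \<le> W h k" "\<And>h. 0 < W h h"
    using net unfolding community_network_def by auto
  have sym: "\<And>h k. W h k = W k h"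
    using undirected unfolding undirected_mat_def by auto
  show ?thesis
    unfolding sum_xdot_eq[of W, OF sym]
    by (rule double_sum_pos_of_positive_diagonal[where a="\<lambda>k. x i k", OF W xnn \<open>0 < x i k0\<close> gain])
qed

lemma abs_diff_le_xdist:
  fixes x z :: "'a::finite \<Rightarrow> 'h::finite \<Rightarrow> real"
  shows "\<bar>x j h - z j h\<bar> \<le> xdist x z"
proof -
  have "(x j h - z j h)^2 \<le> (\<Sum>h\<in>UNIV. (x j h - z j h)^2)"
    by (rule member_le_sum) auto
  also have "\<dots> \<le> (\<Sum>i\<in>UNIV. \<Sum>h\<in>UNIV. (x i h - z i h)^2)"
    by (rule member_le_sum[where f="\<lambda>i. \<Sum>h\<in>UNIV. (x i h - z i h)^2"]) (auto intro: sum_nonneg)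
  finally have "sqrt ((x j h - z j h)^2) \<le> sqrt (\<Sum>i\<in>UNIV. \<Sum>h\<in>UNIV. (x i h - z i h)^2)"
    by (rule real_sqrt_le_mono)
  then show ?thesis unfolding xdist_def real_sqrt_abs .
qed

lemma ydist_agg_le_xdist:
  fixes x z :: "'a::finite \<Rightarrow> 'h::finite \<Rightarrow> real"
  shows "ydist (agg x) (agg z) \<le> real (CARD('a) * CARD('h)) * xdist x z"
proof -
  have agg_diff: "\<bar>agg x j - agg z j\<bar> \<le> real CARD('h) * xdist x z" for j
  proof -
    have "\<bar>agg x j - agg z j\<bar> \<le> (\<Sum>h\<in>UNIV. \<bar>x j h - z j h\<bar>)"
      unfolding agg_def sum_subtractf[symmetric] by (rule sum_abs)
    also have "\<dots> \<le> (\<Sum>h\<in>(UNIV::'h set). xdist x z)" by (intro sum_mono abs_diff_le_xdist)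
    finally show ?thesis by simp
  qed
  have "ydist (agg x) (agg z) = L2_set (\<lambda>j. agg x j - agg z j) UNIV"
    unfolding ydist_def L2_set_def by simp
  also have "\<dots> \<le> (\<Sum>j\<in>UNIV. \<bar>agg x j - agg z j\<bar>)" by (rule L2_set_le_sum_abs)
  also have "\<dots> \<le> (\<Sum>j\<in>(UNIV::'a set). real CARD('h) * xdist x z)"
    by (intro sum_mono agg_diff)
  finally show ?thesis by simp
qed

lemma agg_in_simplexY:
  assumes "x \<in> stateX eta" "(\<Sum>h\<in>UNIV. eta h) = 1"
  shows "agg x \<in> simplexY"
proof -
  have "(\<Sum>j\<in>UNIV. agg x j) = (\<Sum>h\<in>UNIV. \<Sum>j\<in>UNIV. x j h)"
    unfolding agg_def by (rule sum.swap)
  then show ?thesis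
    using assms unfolding simplexY_def stateX_def agg_def by (auto intro: sum_nonneg)
qed

lemma imitation_mechanism_Lipschitz_xdist:
  fixes f :: "('a::finite \<Rightarrow> real) \<Rightarrow> 'a \<Rightarrow> 'a \<Rightarrow> real" and eta :: "'h::finite \<Rightarrow> real"
  assumes "imitation_mechanism f" "(\<Sum>h\<in>UNIV. eta h) = 1"
  obtains K where "0 < K"
    "\<And>x z a b. x \<in> stateX eta \<Longrightarrow> z \<in> stateX eta \<Longrightarrow>
       \<bar>f (agg x) a b - f (agg z) a b\<bar> \<le> K * xdist x z"
proof -
  obtain L where L: "\<And>y z a b. y \<in> simplexY \<Longrightarrow> z \<in> simplexY \<Longrightarrow>
      \<bar>f y a b - f z a b\<bar> \<le> L * ydist y z"
    using assms(1) unfolding imitation_mechanism_def by blast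
  define N where "N = real (CARD('a) * CARD('h))"
  have "0 < N" unfolding N_def by simp
  show thesis
  proof
    show "0 < (\<bar>L\<bar> + 1) * N" using \<open>0 < N\<close> by simp
    fix x z :: "'a \<Rightarrow> 'h \<Rightarrow> real" and a b
    assume "x \<in> stateX eta" "z \<in> stateX eta"
    then have "\<bar>f (agg x) a b - f (agg z) a b\<bar> \<le> L * ydist (agg x) (agg z)"
      using L agg_in_simplexY assms(2) by blast
    also have "\<dots> \<le> (\<bar>L\<bar> + 1) * ydist (agg x) (agg z)"
      by (intro mult_right_mono) (auto simp: ydist_def intro!: sum_nonneg)
    also have "\<dots> \<le> (\<bar>L\<bar> + 1) * (N * xdist x z)"
      unfolding N_def by (intro mult_left_mono ydist_agg_le_xdist) simp
    finally show "\<bar>f (agg x) a b - f (agg z) a b\<bar> \<le> (\<bar>L\<bar> + 1) * N * xdist x z"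
      by (simp add: mult.assoc)
  qed
qed

lemma stateX_zero_off_support:
  assumes "xb \<in> stateX eta" "j \<notin> support (agg xb)"
  shows "xb j h = 0"
proof -
  have nn: "\<And>h. 0 \<le> xb j h" using assms(1) unfolding stateX_def by auto
  then have "(\<Sum>h\<in>UNIV. xb j h) = 0"
    using assms(2) unfolding support_def agg_def by (simp add: sum_nonneg order.antisym not_less)
  then show ?thesis using nn sum_nonneg_eq_0_iff[of UNIV "xb j"] by auto
qed

lemma sum_off_support_le_xdist:
  fixes x xb :: "'a::finite \<Rightarrow> 'h::finite \<Rightarrow> real"
  assumes "x \<in> stateX eta" "xb \<in> stateX eta"
  shows "(\<Sum>j\<in>UNIV - support (agg xb). x j h) \<le> real CARD('a) * xdist x xb"
proof -
  have "(\<Sum>j\<in>UNIV - support (agg xb). x j h) = (\<Sum>j\<in>UNIV - support (agg xb). \<bar>x j h - xb j h\<bar>)"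
    using assms stateX_zero_off_support[OF assms(2)] unfolding stateX_def by (intro sum.cong) auto
  also have "\<dots> \<le> (\<Sum>j\<in>UNIV. \<bar>x j h - xb j h\<bar>)" by (intro sum_mono2) auto
  also have "\<dots> \<le> (\<Sum>j\<in>(UNIV::'a set). xdist x xb)" by (intro sum_mono abs_diff_le_xdist)
  finally show ?thesis by simp
qed

lemma weighted_sum_pos:
  fixes w g :: "'a \<Rightarrow> real"
  assumes "finite A" "S \<subseteq> A" "\<And>j. j \<in> A \<Longrightarrow> 0 \<le> w j"
    and "\<And>j. j \<in> S \<Longrightarrow> \<delta> \<le> g j" "\<And>j. j \<in> A - S \<Longrightarrow> - C \<le> g j"
    and "0 \<le> \<delta> + C" "(\<Sum>j\<in>A - S. w j) \<le> s" "(\<delta> + C) * s < \<delta> * (\<Sum>j\<in>A. w j)"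
  shows "0 < (\<Sum>j\<in>A. w j * g j)"
proof -
  have split: "(\<Sum>j\<in>A. F j) = (\<Sum>j\<in>A - S. F j) + (\<Sum>j\<in>S. F j)" for F :: "'a \<Rightarrow> real"
    by (rule sum.subset_diff[OF assms(2,1)])
  have "\<delta> * (\<Sum>j\<in>S. w j) \<le> (\<Sum>j\<in>S. w j * g j)"
    unfolding sum_distrib_left using assms(2-4)
    by (intro sum_mono) (simp add: mult.commute mult_right_mono subset_eq)
  moreover have "- C * (\<Sum>j\<in>A - S. w j) \<le> (\<Sum>j\<in>A - S. w j * g j)"
    unfolding sum_distrib_left using assms(3,5)
    by (intro sum_mono) (metis DiffD1 mult.commute mult_right_mono)
  moreover have "(\<delta> + C) * (\<Sum>j\<in>A - S. w j) \<le> (\<delta> + C) * s"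
    using assms(6,7) by (rule mult_left_mono[rotated])
  ultimately show ?thesis
    using split[of w] split[of "\<lambda>j. w j * g j"] assms(8) by (simp add: algebra_simps)
qed

lemma support_gain_of_payoff_gap:
  assumes "assumption1 r f" "y \<in> simplexY" "r j y < r i y"
  shows "f y i j < f y j i"
proof -
  have "sgn (f y j i - f y i j) = 1"
    using assms unfolding assumption1_def by (metis diff_gt_0_iff_gt sgn_pos)
  then show ?thesis by (simp add: sgn_1_pos)
qed

lemma imitation_gain_pos_near:
  fixes f :: "('a::finite \<Rightarrow> real) \<Rightarrow> 'a \<Rightarrow> 'a \<Rightarrow> real" and eta :: "'h::finite \<Rightarrow> real"
  assumes net: "community_network eta W" and imit: "imitation_mechanism f"
    and xb: "xb \<in> stateX eta"
    and gain: "\<And>j. j \<in> support (agg xb) \<Longrightarrow> f (agg xb) i j < f (agg xb) j i"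
  shows "\<exists>\<epsilon>>0. \<forall>x\<in>stateX eta. xdist x xb < \<epsilon> \<longrightarrow>
           (\<forall>h. 0 < (\<Sum>j\<in>UNIV. x j h * (f (agg x) j i - f (agg x) i j)))"
proof -
  define S where "S = support (agg xb)"
  define g0 where "g0 j = f (agg xb) j i - f (agg xb) i j" for j
  have eta_pos: "\<And>h. 0 < eta h" and eta_sum: "(\<Sum>h\<in>UNIV. eta h) = 1"
    using net unfolding community_network_def by auto
  obtain K where "0 < K" and K: "\<And>x a b. x \<in> stateX eta \<Longrightarrow>
      \<bar>f (agg x) a b - f (agg xb) a b\<bar> \<le> K * xdist x xb"
    using imitation_mechanism_Lipschitz_xdist[OF imit eta_sum] xb by metis
  define d where "d = Min (insert 1 (g0 ` S))"
  have "0 < d" unfolding d_def using gain by (subst Min_gr_iff) (auto simp: g0_def S_def)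
  have d_le: "\<And>j. j \<in> S \<Longrightarrow> d \<le> g0 j" unfolding d_def by (intro Min_le) auto
  define C where "C = (\<Sum>j\<in>UNIV. \<bar>g0 j\<bar>) + d / 2"
  have C_ge: "\<And>j. \<bar>g0 j\<bar> + d / 2 \<le> C"
    unfolding C_def by (simp add: member_le_sum[of _ UNIV "\<lambda>j. \<bar>g0 j\<bar>"])
  have "0 < C" using C_ge[of i] \<open>0 < d\<close> by linarith
  define m where "m = Min (range eta)"
  have "0 < m" unfolding m_def using eta_pos by (subst Min_gr_iff) auto
  have m_le: "\<And>h. m \<le> eta h" unfolding m_def by (rule Min_le) auto
  \<comment> \<open>The first bound keeps each gain within d/2 of its value at xb; the second makes
    the mass off the support too small to spoil positivity.\<close>
  define \<epsilon> where "\<epsilon> = min (d / (4 * K)) (m * d / (2 * real CARD('a) * (d/2 + C)))"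
  have "0 < \<epsilon>" unfolding \<epsilon>_def using \<open>0 < d\<close> \<open>0 < K\<close> \<open>0 < m\<close> \<open>0 < C\<close> by auto
  moreover have "0 < (\<Sum>j\<in>UNIV. x j h * (f (agg x) j i - f (agg x) i j))"
    if x: "x \<in> stateX eta" and close: "xdist x xb < \<epsilon>" for x h
  proof -
    have "K * xdist x xb \<le> d / 4"
      using close \<open>0 < K\<close> unfolding \<epsilon>_def by (simp add: field_simps)
    then have dev: "\<bar>(f (agg x) j i - f (agg x) i j) - g0 j\<bar> \<le> d / 2" for j
      using K[OF x, of j i] K[OF x, of i j] unfolding g0_def by linarith
    have gain_on_S: "d / 2 \<le> f (agg x) j i - f (agg x) i j" if "j \<in> S" for j
      using dev[of j] d_le[OF that] unfolding abs_le_iff by linarith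
    have gain_lower: "- C \<le> f (agg x) j i - f (agg x) i j" for j
      using dev[of j] C_ge[of j] unfolding abs_le_iff by linarith
    have "(d/2 + C) * (real CARD('a) * xdist x xb) < (d/2 + C) * (real CARD('a) * \<epsilon>)"
      using close \<open>0 < d\<close> \<open>0 < C\<close> by simp
    also have "\<dots> \<le> (d/2 + C) * (real CARD('a) * (m * d / (2 * real CARD('a) * (d/2 + C))))"
      using \<open>0 < d\<close> \<open>0 < C\<close> unfolding \<epsilon>_def by (intro mult_left_mono) auto
    also have "\<dots> = d / 2 * m"
    proof -
      have "2 * real CARD('a) * (d/2 + C) \<noteq> 0" using \<open>0 < d\<close> \<open>0 < C\<close> by simp
      then show ?thesis by (simp add: field_simps)
    qed
    also have "\<dots> \<le> d / 2 * (\<Sum>j\<in>UNIV. x j h)"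
      using x m_le \<open>0 < d\<close> unfolding stateX_def by simp
    finally have "(d/2 + C) * (real CARD('a) * xdist x xb) < d / 2 * (\<Sum>j\<in>UNIV. x j h)" .
    then show ?thesis
      using x sum_off_support_le_xdist[OF x xb, of h] \<open>0 < d\<close> \<open>0 < C\<close>
      by (intro weighted_sum_pos[where S=S, OF _ _ _ gain_on_S gain_lower])
        (auto simp: stateX_def S_def)
  qed
  ultimately show ?thesis by blast
qed

theorem lemma1:
  fixes r :: "'a::finite \<Rightarrow> ('a \<Rightarrow> real) \<Rightarrow> real"
    and eta :: "'h::finite \<Rightarrow> real"
    and W :: "'h \<Rightarrow> 'h \<Rightarrow> real"
    and f :: "('a \<Rightarrow> real) \<Rightarrow> 'a \<Rightarrow> 'a \<Rightarrow> real"
    and xb :: "'a \<Rightarrow> 'h \<Rightarrow> real"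
    and i :: 'a
  assumes r_cont: "\<And>j. continuous_on simplexY (r j)"
    and net: "community_network eta W"
    and undirected: "undirected_mat W"
    and connected: "irreducible_mat W"
    and imit: "imitation_mechanism f"
    and A1: "assumption1 r f"
    and xb: "xb \<in> RestrNashX eta r - NashX eta r"
    and better: "\<And>j. j \<in> support (agg xb) \<Longrightarrow> r i (agg xb) > r j (agg xb)"
  shows "\<exists>\<epsilon>>0. \<forall>x\<in>stateX eta. xdist x xb < \<epsilon> \<and> agg x i > 0 \<longrightarrow>
           (\<Sum>h\<in>UNIV. xdot W f x i h) > 0"
proof -
  have xbX: "xb \<in> stateX eta" and ybY: "agg xb \<in> simplexY"
    using xb unfolding RestrNashX_def RestrNashY_def by auto
  have "\<And>j. j \<in> support (agg xb) \<Longrightarrow> f (agg xb) i j < f (agg xb) j i"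
    using support_gain_of_payoff_gap[OF A1 ybY] better by blast
  then obtain \<epsilon> where "0 < \<epsilon>" and gain: "\<forall>x\<in>stateX eta. xdist x xb < \<epsilon> \<longrightarrow>
      (\<forall>h. 0 < (\<Sum>j\<in>UNIV. x j h * (f (agg x) j i - f (agg x) i j)))"
    using imitation_gain_pos_near[OF net imit xbX] by blast
  then show ?thesis
    using sum_xdot_pos[OF net undirected] by blast
qed

end
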